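(* Let $G$ be a finitely generated group and $\mathcal{P}$ a finite family of infinite subgroups with $\mathcal{P}\hookrightarrow_h G$. If $H\le G$ is $(G,\mathcal{P})$--quasiconvex and $H'$ is a finite-index subgroup of $H$, then $H'$ is also $(G,\mathcal{P})$--quasiconvex.
   Context: A graph is fine at $v$ if the angle metric on neighbours of $v$ ($\angle_v(x,y)$ = length of a shortest path from $x$ to $y$ avoiding $v$) is locally finite. A $(G,\mathcal{P})$--graph: a connected hyperbolic graph with a $G$-action having finitely many vertex orbits, vertex stabilizers finite or conjugates of members of $\mathcal{P}$ (each $P\in\mathcal{P}$ being the stabilizer of some vertex), finite edge stabilizers, fine at vertices with infinite stabilizer. $H$ is $(G,\mathcal{P})$--quasiconvex if some $(G,\mathcal{P})$--graph $K$ has a nonempty connected $H$-invariant quasi-isometrically embedded subgraph $L$ with finitely many $H$-orbits of vertices. $\mathcal{P}\hookrightarrow_h G$ means the existence of a $(G,\mathcal{P})$--graph (equivalently, hyperbolic embedding in the sense of Dahmani–Guirardel–Osin). *)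

theory Defs
  imports "HOL-Algebra.Algebra"
begin

definition simple_graph :: "'v set \<Rightarrow> ('v \<Rightarrow> 'v \<Rightarrow> bool) \<Rightarrow> bool" where
  "simple_graph V E \<longleftrightarrow> (\<forall>u v. E u v \<longrightarrow> u \<in> V \<and> v \<in> V) \<and> (\<forall>u v. E u v \<longrightarrow> E v u) \<and> (\<forall>v. \<not> E v v)"

definition is_walk :: "'v set \<Rightarrow> ('v \<Rightarrow> 'v \<Rightarrow> bool) \<Rightarrow> 'v list \<Rightarrow> bool" where
  "is_walk V E p \<longleftrightarrow> p \<noteq> [] \<and> set p \<subseteq> V \<and> (\<forall>i. Suc i < length p \<longrightarrow> E (p ! i) (p ! Suc i))"

definition walk_between :: "'v set \<Rightarrow> ('v \<Rightarrow> 'v \<Rightarrow> bool) \<Rightarrow> 'v \<Rightarrow> 'v \<Rightarrow> nat \<Rightarrow> bool" where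
  "walk_between V E x y n \<longleftrightarrow> (\<exists>p. is_walk V E p \<and> hd p = x \<and> last p = y \<and> length p = Suc n)"

definition connected_graph :: "'v set \<Rightarrow> ('v \<Rightarrow> 'v \<Rightarrow> bool) \<Rightarrow> bool" where
  "connected_graph V E \<longleftrightarrow> V \<noteq> {} \<and> (\<forall>x\<in>V. \<forall>y\<in>V. \<exists>n. walk_between V E x y n)"

definition gdist :: "'v set \<Rightarrow> ('v \<Rightarrow> 'v \<Rightarrow> bool) \<Rightarrow> 'v \<Rightarrow> 'v \<Rightarrow> nat" where
  "gdist V E x y = (LEAST n. walk_between V E x y n)"

definition gromov_product :: "'v set \<Rightarrow> ('v \<Rightarrow> 'v \<Rightarrow> bool) \<Rightarrow> 'v \<Rightarrow> 'v \<Rightarrow> 'v \<Rightarrow> real" where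
  "gromov_product V E w x y =
     (real (gdist V E w x) + real (gdist V E w y) - real (gdist V E x y)) / 2"

definition hyperbolic_graph :: "'v set \<Rightarrow> ('v \<Rightarrow> 'v \<Rightarrow> bool) \<Rightarrow> bool" where
  "hyperbolic_graph V E \<longleftrightarrow> (\<exists>\<delta>::real. \<delta> \<ge> 0 \<and> (\<forall>w\<in>V. \<forall>x\<in>V. \<forall>y\<in>V. \<forall>z\<in>V.
      gromov_product V E w x y \<ge> min (gromov_product V E w x z) (gromov_product V E w y z) - \<delta>))"

text \<open>Fineness at v: the angle metric on the neighbours of v (length of a shortest
  path avoiding v) is locally finite, i.e. all its balls of finite radius are finite.\<close>
definition fine_at :: "'v set \<Rightarrow> ('v \<Rightarrow> 'v \<Rightarrow> bool) \<Rightarrow> 'v \<Rightarrow> bool" where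
  "fine_at V E v \<longleftrightarrow> (\<forall>x. E v x \<longrightarrow> (\<forall>n::nat.
      finite {y. E v y \<and> (\<exists>m\<le>n. walk_between (V - {v}) E x y m)}))"

definition qi_embedded_subgraph ::
  "'v set \<Rightarrow> ('v \<Rightarrow> 'v \<Rightarrow> bool) \<Rightarrow> 'v set \<Rightarrow> ('v \<Rightarrow> 'v \<Rightarrow> bool) \<Rightarrow> bool" where
  "qi_embedded_subgraph V E VL EL \<longleftrightarrow> (\<exists>lam c :: real. lam \<ge> 1 \<and> c \<ge> 0 \<and>
     (\<forall>x\<in>VL. \<forall>y\<in>VL.
        real (gdist VL EL x y) / lam - c \<le> real (gdist V E x y) \<and>
        real (gdist V E x y) \<le> lam * real (gdist VL EL x y) + c))"

definition graph_action ::
  "('g, 'b) monoid_scheme \<Rightarrow> 'v set \<Rightarrow> ('v \<Rightarrow> 'v \<Rightarrow> bool) \<Rightarrow> ('g \<Rightarrow> 'v \<Rightarrow> 'v) \<Rightarrow> bool" where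
  "graph_action G V E act \<longleftrightarrow>
     (\<forall>g\<in>carrier G. \<forall>v\<in>V. act g v \<in> V) \<and>
     (\<forall>v\<in>V. act \<one>\<^bsub>G\<^esub> v = v) \<and>
     (\<forall>g\<in>carrier G. \<forall>h\<in>carrier G. \<forall>v\<in>V. act (g \<otimes>\<^bsub>G\<^esub> h) v = act g (act h v)) \<and>
     (\<forall>g\<in>carrier G. \<forall>u v. E u v \<longrightarrow> E (act g u) (act g v))"

definition vstab :: "('g, 'b) monoid_scheme \<Rightarrow> ('g \<Rightarrow> 'v \<Rightarrow> 'v) \<Rightarrow> 'v \<Rightarrow> 'g set" where
  "vstab G act v = {g \<in> carrier G. act g v = v}"

definition estab :: "('g, 'b) monoid_scheme \<Rightarrow> ('g \<Rightarrow> 'v \<Rightarrow> 'v) \<Rightarrow> 'v \<Rightarrow> 'v \<Rightarrow> 'g set" where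
  "estab G act u v = {g \<in> carrier G. {act g u, act g v} = {u, v}}"

definition orbit_of :: "'g set \<Rightarrow> ('g \<Rightarrow> 'v \<Rightarrow> 'v) \<Rightarrow> 'v \<Rightarrow> 'v set" where
  "orbit_of S act v = (\<lambda>g. act g v) ` S"

definition GP_graph ::
  "('g, 'b) monoid_scheme \<Rightarrow> 'g set set \<Rightarrow> 'v set \<Rightarrow> ('v \<Rightarrow> 'v \<Rightarrow> bool) \<Rightarrow> ('g \<Rightarrow> 'v \<Rightarrow> 'v) \<Rightarrow> bool" where
  "GP_graph G \<P> V E act \<longleftrightarrow>
     simple_graph V E \<and> connected_graph V E \<and> hyperbolic_graph V E \<and>
     graph_action G V E act \<and>
     finite (orbit_of (carrier G) act ` V) \<and>
     (\<forall>v\<in>V. finite (vstab G act v) \<or>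
        (\<exists>P\<in>\<P>. \<exists>g\<in>carrier G. vstab G act v = (\<lambda>p. g \<otimes>\<^bsub>G\<^esub> p \<otimes>\<^bsub>G\<^esub> inv\<^bsub>G\<^esub> g) ` P)) \<and>
     (\<forall>P\<in>\<P>. \<exists>v\<in>V. vstab G act v = P) \<and>
     (\<forall>u v. E u v \<longrightarrow> finite (estab G act u v)) \<and>
     (\<forall>v\<in>V. infinite (vstab G act v) \<longrightarrow> fine_at V E v)"

text \<open>Vertices are taken in nat: G is finitely generated hence countable, and a
  (G,P)-graph has finitely many orbits, so has countably many vertices; every
  (G,P)-graph is isomorphic to one with vertex set a subset of nat.\<close>
definition hyp_embedded :: "('g, 'b) monoid_scheme \<Rightarrow> 'g set set \<Rightarrow> bool" where
  "hyp_embedded G \<P> \<longleftrightarrow> (\<exists>(V :: nat set) E act. GP_graph G \<P> V E act)"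

definition GP_quasiconvex :: "('g, 'b) monoid_scheme \<Rightarrow> 'g set set \<Rightarrow> 'g set \<Rightarrow> bool" where
  "GP_quasiconvex G \<P> H \<longleftrightarrow> (\<exists>(V :: nat set) E act. GP_graph G \<P> V E act \<and>
     (\<exists>VL EL. VL \<subseteq> V \<and> (\<forall>u v. EL u v \<longrightarrow> E u v) \<and>
        simple_graph VL EL \<and> connected_graph VL EL \<and>
        (\<forall>h\<in>H. \<forall>v\<in>VL. act h v \<in> VL) \<and>
        (\<forall>h\<in>H. \<forall>u v. EL u v \<longrightarrow> EL (act h u) (act h v)) \<and>
        finite (orbit_of H act ` VL) \<and>
        qi_embedded_subgraph V E VL EL))"

definition finitely_generated_group :: "('g, 'b) monoid_scheme \<Rightarrow> bool" where
  "finitely_generated_group G \<longleftrightarrow> (\<exists>S. finite S \<and> S \<subseteq> carrier G \<and> generate G S = carrier G)"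

end

theory Submission
  imports Defs
begin

text \<open>The subgraph L witnessing the quasiconvexity of H also witnesses that of H':
  it is H'-invariant because H' \<le> H, and it still has finitely many H'-orbits of
  vertices, since an H-orbit Hw is the union of the H'-orbits H'hw over the finitely
  many cosets H'h.\<close>

lemma orbit_of_act_eq_image_r_coset:
  fixes G (structure)
  assumes "graph_action G V E act" and "K \<subseteq> carrier G" and "h \<in> carrier G" and "w \<in> V"
  shows "orbit_of K act (act h w) = (\<lambda>x. act x w) ` (K #> h)"
proof -
  have "orbit_of K act (act h w) = (\<lambda>k. act (k \<otimes> h) w) ` K"
    using assms unfolding graph_action_def orbit_of_def by (auto intro!: image_cong)
  then show ?thesis
    unfolding r_coset_def by auto
qed

lemma finite_orbits_finite_index_subgroup:
  fixes G (structure)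
  assumes action: "graph_action G V E act" and "VL \<subseteq> V"
    and "subgroup H G" and "H' \<subseteq> H"
    and finite_index: "finite ((\<lambda>h. H' #> h) ` H)"
    and finite_H_orbits: "finite (orbit_of H act ` VL)"
  shows "finite (orbit_of H' act ` VL)"
proof -
  have HG: "H \<subseteq> carrier G"
    using \<open>subgroup H G\<close> by (rule subgroup.subset)
  obtain R where "R \<subseteq> VL" and "finite R" and R: "orbit_of H act ` VL = orbit_of H act ` R"
    using finite_subset_image[OF finite_H_orbits subset_refl] by blast
  let ?orbit_piece = "\<lambda>(C, w). (\<lambda>x. act x w) ` C"
  have "orbit_of H' act ` VL \<subseteq> ?orbit_piece ` ((\<lambda>h. H' #> h) ` H \<times> R)"
  proof
    fix Ob assume "Ob \<in> orbit_of H' act ` VL"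
    then obtain v where "v \<in> VL" and Ob: "Ob = orbit_of H' act v" by blast
    then obtain w where "w \<in> R" and w: "orbit_of H act v = orbit_of H act w"
      using R by blast
    have "act \<one> v = v"
      using action \<open>v \<in> VL\<close> \<open>VL \<subseteq> V\<close> unfolding graph_action_def by blast
    then have "v \<in> orbit_of H act v"
      unfolding orbit_of_def using subgroup.one_closed[OF \<open>subgroup H G\<close>] by force
    then have "v \<in> orbit_of H act w"
      unfolding w .
    then obtain h where "h \<in> H" and v: "v = act h w"
      unfolding orbit_of_def by blast
    have "w \<in> V"
      using \<open>w \<in> R\<close> \<open>R \<subseteq> VL\<close> \<open>VL \<subseteq> V\<close> by blast
    then have "Ob = (\<lambda>x. act x w) ` (H' #> h)"
      unfolding Ob v using orbit_of_act_eq_image_r_coset[OF action] \<open>h \<in> H\<close> \<open>H' \<subseteq> H\<close> HG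
      by (meson subsetD subset_trans)
    then show "Ob \<in> ?orbit_piece ` ((\<lambda>h. H' #> h) ` H \<times> R)"
      using \<open>h \<in> H\<close> \<open>w \<in> R\<close> by (auto intro!: image_eqI[where x = "(H' #> h, w)"])
  qed
  moreover have "finite (?orbit_piece ` ((\<lambda>h. H' #> h) ` H \<times> R))"
    using finite_index \<open>finite R\<close> by simp
  ultimately show ?thesis
    by (rule finite_subset)
qed

theorem proposition5p3:
  fixes G (structure) and \<P> :: "'g set set" and H H' :: "'g set"
  assumes "group G"
    and "finitely_generated_group G"
    and "finite \<P>"
    and "\<forall>P\<in>\<P>. subgroup P G \<and> infinite P"
    and "hyp_embedded G \<P>"
    and "subgroup H G"
    and "GP_quasiconvex G \<P> H"
    and "subgroup H' G" and "H' \<subseteq> H"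
    and "finite ((\<lambda>h. H' #>\<^bsub>G\<^esub> h) ` H)"
  shows "GP_quasiconvex G \<P> H'"
proof -
  obtain V :: "nat set" and E act VL EL where GP: "GP_graph G \<P> V E act"
    and L: "VL \<subseteq> V" "\<forall>u v. EL u v \<longrightarrow> E u v" "simple_graph VL EL" "connected_graph VL EL"
      "qi_embedded_subgraph V E VL EL"
    and H_invariant: "\<forall>h\<in>H. \<forall>v\<in>VL. act h v \<in> VL" "\<forall>h\<in>H. \<forall>u v. EL u v \<longrightarrow> EL (act h u) (act h v)"
    and H_orbits: "finite (orbit_of H act ` VL)"
    using \<open>GP_quasiconvex G \<P> H\<close> unfolding GP_quasiconvex_def by blast
  have "graph_action G V E act"
    using GP by (simp add: GP_graph_def)
  then have "finite (orbit_of H' act ` VL)"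
    using L(1) \<open>subgroup H G\<close> \<open>H' \<subseteq> H\<close> assms(10) H_orbits
    by (rule finite_orbits_finite_index_subgroup)
  moreover have "\<forall>h\<in>H'. \<forall>v\<in>VL. act h v \<in> VL" "\<forall>h\<in>H'. \<forall>u v. EL u v \<longrightarrow> EL (act h u) (act h v)"
    using H_invariant \<open>H' \<subseteq> H\<close> by blast+
  ultimately show ?thesis
    unfolding GP_quasiconvex_def using GP L by (intro exI conjI) auto
qed

end
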